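(* Let $\alpha\ge0$, $\beta:=\gamma+\alpha>0$, and assume Assumption (A$_f$) and condition (A$_Y$)(b) hold for a continuous $\mathbb{R}_+$-valued process $Y$. Let $U_t:=2\int_0^t f(s,Y_s)\,ds$. Then $$U_t/t^{1+\beta}\xrightarrow{d}2\rho\widetilde{A}\quad\text{as }t\to\infty,$$ where $\widetilde{A}$ is the random variable in (A$_Y$)(b).
   Context: $\mathbb{R}_+=[0,\infty)$. Assumption (A$_f$): $f:\mathbb{R}_+^2\to\mathbb{R}_+$ is continuous and there are $\rho\in(0,\infty)$, $\alpha\in\mathbb{R}_+$, $\gamma\in(-\alpha,\infty)$ such that for every $\varepsilon>0$ there is $r_\varepsilon$ with $\sup_{t+y\ge r_\varepsilon}|f(t,y)(1+t)^{-\gamma}(1+y)^{-\alpha}-\rho|\le\varepsilon$. Let $A_t:=\int_1^t s^\gamma Y_s^\alpha\,ds$, $t\ge1$. Condition (A$_Y$)(b): there is an $\mathbb{R}_+$-valued random variable $\widetilde{A}$ with $A_t/t^{1+\gamma+\alpha}\xrightarrow{d}\widetilde{A}$ as $t\to\infty$. *)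

theory Defs
  imports "HOL-Probability.Probability"
begin

text \<open>Real power with the convention x^0 = 1 (Isabelle's powr has 0 powr 0 = 0).\<close>
definition rpow :: "real \<Rightarrow> real \<Rightarrow> real" where
  "rpow x a = (if a = 0 then 1 else x powr a)"

definition conv_distr_at_top ::
  "'a measure \<Rightarrow> (real \<Rightarrow> 'a \<Rightarrow> real) \<Rightarrow> ('a \<Rightarrow> real) \<Rightarrow> bool" where
  "conv_distr_at_top M X L \<longleftrightarrow>
     (\<forall>g :: real \<Rightarrow> real. continuous_on UNIV g \<longrightarrow> bounded (range g) \<longrightarrow>
        ((\<lambda>t. integral\<^sup>L M (\<lambda>\<omega>. g (X t \<omega>))) \<longlongrightarrow> integral\<^sup>L M (\<lambda>\<omega>. g (L \<omega>))) at_top)"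

end

theory Submission
  imports Defs "HOL-Real_Asymp.Real_Asymp"
begin

text \<open>By (A_f), for large s the integrand f(s, Y_s) equals \<rho> s^\<gamma> Y_s^\<alpha> up to a relative error \<eta>
  and an additive error C s^\<gamma>, with C = 0 when \<alpha> = 0. Integrating, U_t/2 - \<rho> A_t is pathwise at
  most \<eta> A_t plus a term that is o(t^(1+\<beta>)). Such an approximation transfers convergence in
  distribution: the tails of A_t/t^(1+\<beta>) are uniformly small because it converges in distribution,
  and on the bulk a bounded continuous test function is uniformly continuous. The random variables
  U_t are measurable as pointwise limits of Riemann sums.\<close>

lemma integral_split_grid:
  fixes a b :: real and h :: "real \<Rightarrow> real"
  assumes ab: "a \<le> b" and n: "n > 0" and hc: "continuous_on {a..b} h"
  shows "integral {a..b} h = (\<Sum>k<n. integral {a + real k * (b-a)/n .. a + real (Suc k) * (b-a)/n} h)"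
proof -
  define x where "x k = a + real k * (b-a)/n" for k :: nat
  have x_mono: "x i \<le> x j" if "i \<le> j" for i j
    unfolding x_def using that ab n by (intro add_left_mono divide_right_mono mult_right_mono) auto
  have "h integrable_on {a..b}" using hc by (rule integrable_continuous_real)
  have "integral {a..x m} h = (\<Sum>k<m. integral {x k..x (Suc k)} h)" if "m \<le> n" for m
    using that
  proof (induction m)
    case (Suc m)
    have "x (Suc m) \<le> b" using x_mono[OF Suc.prems] n by (simp add: x_def)
    then have "h integrable_on {a..x (Suc m)}"
      using integrable_on_subinterval[OF \<open>h integrable_on {a..b}\<close>, of a "x (Suc m)"] by auto
    then have "integral {a..x m} h + integral {x m..x (Suc m)} h = integral {a..x (Suc m)} h"
      using x_mono[of 0 m] x_mono[of m "Suc m"]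
      by (intro Henstock_Kurzweil_Integration.integral_combine) (auto simp: x_def)
    then show ?case using Suc by simp
  qed (simp add: x_def)
  from this[of n] show ?thesis using n by (simp add: x_def)
qed

lemma grid_point_mem:
  fixes a b :: real
  assumes "a \<le> b" and "k \<le> m" and "m > 0"
  shows "a + real k * (b-a)/m \<in> {a..b}"
proof -
  have "real k * (b-a) \<le> real m * (b-a)" using assms by (intro mult_right_mono) auto
  moreover have "0 \<le> real k * (b-a)" using assms by simp
  ultimately show ?thesis using assms by (simp add: field_simps)
qed

lemma integral_minus_left_value_le:
  fixes x y e :: real and h :: "real \<Rightarrow> real"
  assumes "x \<le> y" and "continuous_on {x..y} h" and "\<And>s. s \<in> {x..y} \<Longrightarrow> \<bar>h s - h x\<bar> \<le> e"
  shows "\<bar>integral {x..y} h - (y - x) * h x\<bar> \<le> e * (y - x)"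
proof -
  have "integral {x..y} (\<lambda>s. h s - h x) = integral {x..y} h - (y - x) * h x"
    using assms by (subst integral_diff) (auto intro!: integrable_continuous_real)
  moreover have "norm (integral {x..y} (\<lambda>s. h s - h x)) \<le> e * (y - x)"
    using assms by (intro integral_bound continuous_intros) auto
  ultimately show ?thesis by simp
qed

lemma riemann_sum_tendsto:
  fixes a b :: real and h :: "real \<Rightarrow> real"
  assumes ab: "a \<le> b" and hc: "continuous_on {a..b} h"
  shows "(\<lambda>n. \<Sum>k<Suc n. (b-a)/Suc n * h (a + real k * (b-a)/Suc n)) \<longlonglongrightarrow> integral {a..b} h"
proof (rule LIMSEQ_I)
  fix r :: real assume "r > 0"
  define e where "e = r / (2 * (b - a + 1))"
  have "e > 0" using \<open>r > 0\<close> ab by (simp add: e_def)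
  have "uniformly_continuous_on {a..b} h" by (rule compact_uniformly_continuous[OF hc]) auto
  then obtain d where "d > 0" and d: "\<And>x y. x \<in> {a..b} \<Longrightarrow> y \<in> {a..b} \<Longrightarrow> dist y x < d \<Longrightarrow> dist (h y) (h x) < e"
    unfolding uniformly_continuous_on_def using \<open>e > 0\<close> by metis
  obtain N :: nat where N: "real N > (b - a) / d" using reals_Archimedean2 by blast
  show "\<exists>N. \<forall>n\<ge>N. norm ((\<Sum>k<Suc n. (b-a)/Suc n * h (a + real k * (b-a)/Suc n)) - integral {a..b} h) < r"
  proof (intro exI allI impI)
    fix n assume "n \<ge> N"
    define m where "m = Suc n"
    define x where "x k = a + real k * (b-a)/m" for k :: nat
    have x_step: "x (Suc k) - x k = (b-a)/m" for k by (simp add: x_def diff_divide_distrib[symmetric] algebra_simps)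
    have "(b-a)/d < m" using N \<open>n \<ge> N\<close> by (simp add: m_def)
    then have "(b-a)/m < d" using \<open>d > 0\<close> by (simp add: m_def field_simps)
    have cell: "\<bar>integral {x k..x (Suc k)} h - (b-a)/m * h (x k)\<bar> \<le> e * ((b-a)/m)" if "k < m" for k
    proof -
      have sub: "{x k..x (Suc k)} \<subseteq> {a..b}"
        using grid_point_mem[OF ab, of k m] grid_point_mem[OF ab, of "Suc k" m] that by (auto simp: x_def m_def)
      have "0 \<le> (b-a)/m" using ab by simp
      then have "x k \<le> x (Suc k)" using x_step[of k] by linarith
      moreover have "\<bar>h s - h (x k)\<bar> \<le> e" if "s \<in> {x k..x (Suc k)}" for s
        using d[of "x k" s] sub that x_step[of k] \<open>(b-a)/m < d\<close> \<open>x k \<le> x (Suc k)\<close>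
        by (auto simp: dist_real_def)
      ultimately show ?thesis
        using integral_minus_left_value_le[of "x k" "x (Suc k)" h e] continuous_on_subset[OF hc sub] x_step[of k]
        by simp
    qed
    have "\<bar>(\<Sum>k<m. (b-a)/m * h (x k)) - integral {a..b} h\<bar>
        = \<bar>\<Sum>k<m. integral {x k..x (Suc k)} h - (b-a)/m * h (x k)\<bar>"
      using integral_split_grid[OF ab _ hc, of m] by (simp add: m_def x_def sum_subtractf abs_minus_commute)
    also have "\<dots> \<le> (\<Sum>k<m. e * ((b-a)/m))"
      by (rule order_trans[OF sum_abs sum_mono]) (use cell in auto)
    also have "\<dots> = e * (b - a)" by (simp add: m_def)
    also have "\<dots> < r" using \<open>r > 0\<close> ab by (simp add: e_def field_simps) (smt (verit) mult_right_mono)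
    finally show "norm ((\<Sum>k<Suc n. (b-a)/Suc n * h (a + real k * (b-a)/Suc n)) - integral {a..b} h) < r"
      by (simp add: m_def x_def)
  qed
qed

lemma borel_measurable_integral_continuous_param:
  fixes a b :: real and h :: "real \<Rightarrow> 'a \<Rightarrow> real"
  assumes ab: "a \<le> b"
    and h_meas: "\<And>s. s \<in> {a..b} \<Longrightarrow> h s \<in> borel_measurable M"
    and h_cont: "\<And>\<omega>. \<omega> \<in> space M \<Longrightarrow> continuous_on {a..b} (\<lambda>s. h s \<omega>)"
  shows "(\<lambda>\<omega>. integral {a..b} (\<lambda>s. h s \<omega>)) \<in> borel_measurable M"
proof (rule borel_measurable_LIMSEQ_real)
  fix \<omega> assume "\<omega> \<in> space M"
  then show "(\<lambda>n. \<Sum>k<Suc n. (b-a)/Suc n * h (a + real k * (b-a)/Suc n) \<omega>) \<longlonglongrightarrow> integral {a..b} (\<lambda>s. h s \<omega>)"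
    by (rule riemann_sum_tendsto[OF ab h_cont])
next
  fix n :: nat
  have "a + real k * (b-a)/Suc n \<in> {a..b}" if "k < Suc n" for k
    using grid_point_mem[OF ab, of k "Suc n"] that by simp
  then show "(\<lambda>\<omega>. \<Sum>k<Suc n. (b-a)/Suc n * h (a + real k * (b-a)/Suc n) \<omega>) \<in> borel_measurable M"
    by (intro borel_measurable_sum borel_measurable_times borel_measurable_const h_meas) auto
qed

lemma perturbed_product_bound:
  fixes q u a b \<rho> \<epsilon> C :: real
  assumes "\<bar>q - \<rho>\<bar> \<le> \<epsilon>" and "\<bar>u - 1\<bar> \<le> \<epsilon>" and "\<epsilon> \<le> 1" and "\<rho> \<ge> 0" and "C \<ge> 0"
    and ab: "0 \<le> a" "a \<le> b" "b \<le> (1 + \<epsilon>) * a + C"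
  shows "\<bar>q * u * b - \<rho> * a\<bar> \<le> \<epsilon> * (3 * \<rho> + 4) * a + 2 * (\<rho> + 1) * C"
proof -
  have "\<bar>q * u - \<rho>\<bar> = \<bar>(q - \<rho>) * u + \<rho> * (u - 1)\<bar>" by (simp add: algebra_simps)
  also have "\<dots> \<le> \<bar>(q - \<rho>) * u\<bar> + \<bar>\<rho> * (u - 1)\<bar>" by (rule abs_triangle_ineq)
  also have "\<dots> = \<bar>q - \<rho>\<bar> * \<bar>u\<bar> + \<rho> * \<bar>u - 1\<bar>" using \<open>\<rho> \<ge> 0\<close> by (simp add: abs_mult)
  also have "\<dots> \<le> \<epsilon> * 2 + \<rho> * \<epsilon>" using assms by (intro add_mono mult_mono mult_left_mono) auto
  finally have qu: "\<bar>q * u - \<rho>\<bar> \<le> \<epsilon> * (\<rho> + 2)" by (simp add: algebra_simps)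
  have "b - a \<le> \<epsilon> * a + C" using ab by (simp add: algebra_simps)
  have "q * u * b - \<rho> * a = (q * u - \<rho>) * b + \<rho> * (b - a)" by (simp add: algebra_simps)
  then have "\<bar>q * u * b - \<rho> * a\<bar> \<le> \<bar>q * u - \<rho>\<bar> * b + \<rho> * (b - a)"
    using ab \<open>\<rho> \<ge> 0\<close> abs_triangle_ineq[of "(q * u - \<rho>) * b" "\<rho> * (b - a)"] by (simp add: abs_mult)
  also have "\<dots> \<le> \<epsilon> * (\<rho> + 2) * ((1 + \<epsilon>) * a + C) + \<rho> * (\<epsilon> * a + C)"
    using qu ab \<open>b - a \<le> \<epsilon> * a + C\<close> \<open>\<rho> \<ge> 0\<close> by (intro add_mono mult_mono mult_left_mono) auto
  also have "\<dots> \<le> \<epsilon> * (3 * \<rho> + 4) * a + 2 * (\<rho> + 1) * C"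
  proof -
    have "\<epsilon> * (\<rho> + 2) * ((1 + \<epsilon>) * a) \<le> \<epsilon> * (\<rho> + 2) * (2 * a)"
      using assms by (intro mult_left_mono mult_right_mono) auto
    moreover have "\<epsilon> * (\<rho> + 2) * C \<le> 1 * (\<rho> + 2) * C"
      using assms by (intro mult_right_mono) auto
    ultimately show ?thesis by (simp add: algebra_simps)
  qed
  finally show ?thesis .
qed

lemma one_plus_powr_bound:
  fixes \<alpha> \<epsilon> :: real
  assumes "\<alpha> \<ge> 0" and "\<epsilon> > 0"
  obtains C where "C \<ge> 0" and "\<alpha> = 0 \<Longrightarrow> C = 0"
    and "\<And>y. y \<ge> 0 \<Longrightarrow> rpow y \<alpha> \<le> (1 + y) powr \<alpha>"
    and "\<And>y. y \<ge> 0 \<Longrightarrow> (1 + y) powr \<alpha> \<le> (1 + \<epsilon>) * rpow y \<alpha> + C"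
proof (cases "\<alpha> = 0")
  case True
  then show ?thesis using that[of 0] assms by (simp add: rpow_def)
next
  case False
  with assms have "\<alpha> > 0" by simp
  have "((\<lambda>y. (1 + y) powr \<alpha> / y powr \<alpha>) \<longlongrightarrow> 1) at_top" using \<open>\<alpha> > 0\<close> by real_asymp
  then have "\<forall>\<^sub>F y in at_top. (1 + y) powr \<alpha> / y powr \<alpha> < 1 + \<epsilon>"
    using assms by (intro order_tendstoD) auto
  then obtain y0 where y0: "\<And>y. y \<ge> y0 \<Longrightarrow> (1 + y) powr \<alpha> / y powr \<alpha> < 1 + \<epsilon>"
    by (auto simp: eventually_at_top_linorder)
  define C where "C = (1 + max y0 1) powr \<alpha>"
  have rpow_eq: "rpow y \<alpha> = y powr \<alpha>" for y using False by (simp add: rpow_def)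
  show ?thesis
  proof (rule that[of C])
    fix y :: real assume "y \<ge> 0"
    show "rpow y \<alpha> \<le> (1 + y) powr \<alpha>"
      unfolding rpow_eq using \<open>y \<ge> 0\<close> \<open>\<alpha> > 0\<close> by (intro powr_mono2) auto
    show "(1 + y) powr \<alpha> \<le> (1 + \<epsilon>) * rpow y \<alpha> + C"
    proof (cases "y \<ge> max y0 1")
      case True
      then have "(1 + y) powr \<alpha> < (1 + \<epsilon>) * y powr \<alpha>"
        using y0[of y] by (simp add: divide_less_eq)
      then show ?thesis unfolding rpow_eq C_def by (smt (verit) powr_ge_zero)
    next
      case False
      then have "(1 + y) powr \<alpha> \<le> C"
        unfolding C_def using \<open>y \<ge> 0\<close> \<open>\<alpha> > 0\<close> by (intro powr_mono2) auto
      moreover have "0 \<le> (1 + \<epsilon>) * rpow y \<alpha>" using assms by (simp add: rpow_def)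
      ultimately show ?thesis by linarith
    qed
  qed (use False in \<open>simp_all add: C_def\<close>)
qed

text \<open>C must vanish when \<alpha> = 0: the additive error C s^\<gamma> integrates to order t^(1+\<gamma>), which
  is negligible against t^(1+\<gamma>+\<alpha>) only when \<alpha> > 0.\<close>

lemma asymptotic_power_bound:
  fixes f :: "real \<Rightarrow> real \<Rightarrow> real" and \<rho> \<alpha> \<gamma> \<eta> :: real
  assumes "\<alpha> \<ge> 0" and "\<rho> \<ge> 0" and "\<eta> > 0"
    and A_f: "\<And>\<epsilon>. \<epsilon> > 0 \<Longrightarrow> \<exists>r. \<forall>t y. t \<ge> 0 \<longrightarrow> y \<ge> 0 \<longrightarrow> t + y \<ge> r \<longrightarrow>
                \<bar>f t y * (1 + t) powr (- \<gamma>) * (1 + y) powr (- \<alpha>) - \<rho>\<bar> \<le> \<epsilon>"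
  obtains R C where "R \<ge> 1" and "C \<ge> 0" and "\<alpha> = 0 \<Longrightarrow> C = 0"
    and "\<And>s y. s \<ge> R \<Longrightarrow> y \<ge> 0 \<Longrightarrow>
           \<bar>f s y - \<rho> * (s powr \<gamma> * rpow y \<alpha>)\<bar> \<le> \<eta> * (s powr \<gamma> * rpow y \<alpha>) + C * s powr \<gamma>"
proof -
  define \<epsilon> where "\<epsilon> = min 1 (\<eta> / (3 * \<rho> + 4))"
  have "\<epsilon> > 0" "\<epsilon> \<le> 1" using assms by (auto simp: \<epsilon>_def)
  have "\<epsilon> \<le> \<eta> / (3 * \<rho> + 4)" by (simp add: \<epsilon>_def)
  then have "\<epsilon> * (3 * \<rho> + 4) \<le> \<eta>" using assms by (simp add: le_divide_eq)
  obtain r where r: "\<And>t y. t \<ge> 0 \<Longrightarrow> y \<ge> 0 \<Longrightarrow> t + y \<ge> r \<Longrightarrow>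
      \<bar>f t y * (1 + t) powr (- \<gamma>) * (1 + y) powr (- \<alpha>) - \<rho>\<bar> \<le> \<epsilon>"
    using A_f[OF \<open>\<epsilon> > 0\<close>] by blast
  have "((\<lambda>s. (1 + s) powr \<gamma> / s powr \<gamma>) \<longlongrightarrow> 1) at_top" by real_asymp
  then have "\<forall>\<^sub>F s in at_top. \<bar>(1 + s) powr \<gamma> / s powr \<gamma> - 1\<bar> < \<epsilon>"
    using \<open>\<epsilon> > 0\<close> by (simp add: tendsto_iff dist_real_def)
  then obtain s0 where s0: "\<And>s. s \<ge> s0 \<Longrightarrow> \<bar>(1 + s) powr \<gamma> / s powr \<gamma> - 1\<bar> < \<epsilon>"
    by (auto simp: eventually_at_top_linorder)
  obtain C where C: "C \<ge> 0" "\<alpha> = 0 \<Longrightarrow> C = 0"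
    and Y1: "\<And>y. y \<ge> 0 \<Longrightarrow> rpow y \<alpha> \<le> (1 + y) powr \<alpha>"
    and Y2: "\<And>y. y \<ge> 0 \<Longrightarrow> (1 + y) powr \<alpha> \<le> (1 + \<epsilon>) * rpow y \<alpha> + C"
    using one_plus_powr_bound[OF \<open>\<alpha> \<ge> 0\<close> \<open>\<epsilon> > 0\<close>] by blast
  show ?thesis
  proof (rule that[of "max 1 (max s0 r)" "2 * (\<rho> + 1) * C"])
    fix s y :: real assume "max 1 (max s0 r) \<le> s" "y \<ge> 0"
    then have "s \<ge> 1" "s \<ge> s0" "s \<ge> r" by auto
    define q where "q = f s y * (1 + s) powr (- \<gamma>) * (1 + y) powr (- \<alpha>)"
    define u where "u = (1 + s) powr \<gamma> / s powr \<gamma>"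
    have f_eq: "f s y = s powr \<gamma> * (q * u * (1 + y) powr \<alpha>)"
      using \<open>s \<ge> 1\<close> \<open>y \<ge> 0\<close> by (simp add: q_def u_def powr_minus field_simps)
    have "\<bar>q * u * (1 + y) powr \<alpha> - \<rho> * rpow y \<alpha>\<bar> \<le> \<epsilon> * (3 * \<rho> + 4) * rpow y \<alpha> + 2 * (\<rho> + 1) * C"
      using r[of s y] s0[of s] \<open>s \<ge> 1\<close> \<open>s \<ge> s0\<close> \<open>s \<ge> r\<close> \<open>y \<ge> 0\<close> \<open>\<epsilon> \<le> 1\<close> \<open>\<rho> \<ge> 0\<close> C Y1 Y2
      by (intro perturbed_product_bound) (auto simp: q_def u_def rpow_def)
    also have "\<dots> \<le> \<eta> * rpow y \<alpha> + 2 * (\<rho> + 1) * C"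
      using \<open>\<epsilon> * (3 * \<rho> + 4) \<le> \<eta>\<close> by (intro add_right_mono mult_right_mono) (auto simp: rpow_def)
    finally have "s powr \<gamma> * \<bar>q * u * (1 + y) powr \<alpha> - \<rho> * rpow y \<alpha>\<bar>
        \<le> s powr \<gamma> * (\<eta> * rpow y \<alpha> + 2 * (\<rho> + 1) * C)"
      by (intro mult_left_mono) auto
    moreover have "\<bar>f s y - \<rho> * (s powr \<gamma> * rpow y \<alpha>)\<bar> = s powr \<gamma> * \<bar>q * u * (1 + y) powr \<alpha> - \<rho> * rpow y \<alpha>\<bar>"
    proof -
      have "f s y - \<rho> * (s powr \<gamma> * rpow y \<alpha>) = s powr \<gamma> * (q * u * (1 + y) powr \<alpha> - \<rho> * rpow y \<alpha>)"
        unfolding f_eq by (simp add: algebra_simps)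
      then show ?thesis by (simp add: abs_mult)
    qed
    ultimately show "\<bar>f s y - \<rho> * (s powr \<gamma> * rpow y \<alpha>)\<bar> \<le> \<eta> * (s powr \<gamma> * rpow y \<alpha>) + 2 * (\<rho> + 1) * C * s powr \<gamma>"
      by (simp add: algebra_simps)
  qed (use C \<open>\<rho> \<ge> 0\<close> in auto)
qed

lemma conv_distr_at_top_compose:
  assumes "conv_distr_at_top M X L" and "continuous_on UNIV \<phi>"
  shows "conv_distr_at_top M (\<lambda>t \<omega>. \<phi> (X t \<omega>)) (\<lambda>\<omega>. \<phi> (L \<omega>))"
  unfolding conv_distr_at_top_def
proof (intro allI impI)
  fix g :: "real \<Rightarrow> real" assume "continuous_on UNIV g" "bounded (range g)"
  then have "continuous_on UNIV (g \<circ> \<phi>)" "bounded (range (g \<circ> \<phi>))"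
    using continuous_on_compose2[OF _ assms(2)] by (auto intro: bounded_subset)
  then show "((\<lambda>t. integral\<^sup>L M (\<lambda>\<omega>. g (\<phi> (X t \<omega>)))) \<longlongrightarrow> integral\<^sup>L M (\<lambda>\<omega>. g (\<phi> (L \<omega>)))) at_top"
    using assms(1) unfolding conv_distr_at_top_def comp_def by blast
qed

text \<open>A continuous majorant of the indicator of [c + 1, \<infinity>): convergence in distribution only
  controls expectations of continuous functions.\<close>

definition ramp :: "real \<Rightarrow> real \<Rightarrow> real" where
  "ramp c x = min 1 (max 0 (x - c))"

lemma ramp_bounds: "0 \<le> ramp c x" "ramp c x \<le> 1"
  by (auto simp: ramp_def)

lemma ramp_eq_1: "x \<ge> c + 1 \<Longrightarrow> ramp c x = 1"
  by (simp add: ramp_def)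

lemma continuous_on_ramp: "continuous_on UNIV (ramp c)"
  unfolding ramp_def by (intro continuous_intros)

lemma bounded_range_ramp: "bounded (range (ramp c))"
  unfolding bounded_real using ramp_bounds by (metis abs_of_nonneg rangeE)

lemma conv_distr_at_top_tight:
  assumes "prob_space M" and "L \<in> borel_measurable M" and "conv_distr_at_top M Z L" and "e > 0"
  obtains c where "c \<ge> 0" and "\<forall>\<^sub>F t in at_top. integral\<^sup>L M (\<lambda>\<omega>. ramp c (Z t \<omega>)) < e"
proof -
  interpret prob_space M by fact
  have "((\<lambda>c. integral\<^sup>L M (\<lambda>\<omega>. ramp c (L \<omega>))) \<longlongrightarrow> integral\<^sup>L M (\<lambda>\<omega>. 0)) at_top"
  proof (rule integral_dominated_convergence_at_top[where w="\<lambda>_. 1"])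
    show "(\<lambda>\<omega>. ramp c (L \<omega>)) \<in> borel_measurable M" for c
      using borel_measurable_continuous_on[OF continuous_on_ramp assms(2)] .
    show "\<forall>\<^sub>F c in at_top. AE \<omega> in M. norm (ramp c (L \<omega>)) \<le> 1"
      using ramp_bounds by simp
    show "AE \<omega> in M. ((\<lambda>c. ramp c (L \<omega>)) \<longlongrightarrow> 0) at_top"
    proof (rule AE_I2)
      fix \<omega>
      have "\<forall>\<^sub>F c in at_top. ramp c (L \<omega>) = 0"
        using eventually_ge_at_top[of "L \<omega>"] by eventually_elim (simp add: ramp_def)
      then show "((\<lambda>c. ramp c (L \<omega>)) \<longlongrightarrow> 0) at_top" by (rule tendsto_eventually)
    qed
  qed simp_all
  then have "\<forall>\<^sub>F c in at_top. integral\<^sup>L M (\<lambda>\<omega>. ramp c (L \<omega>)) < e"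
    using \<open>e > 0\<close> by (intro order_tendstoD(2)) auto
  then have "\<forall>\<^sub>F c in at_top. c \<ge> 0 \<and> integral\<^sup>L M (\<lambda>\<omega>. ramp c (L \<omega>)) < e"
    using eventually_ge_at_top[of 0] by eventually_elim simp
  then obtain c where "c \<ge> 0" "integral\<^sup>L M (\<lambda>\<omega>. ramp c (L \<omega>)) < e"
    using eventually_happens'[OF trivial_limit_at_top_linorder] by blast
  moreover have "((\<lambda>t. integral\<^sup>L M (\<lambda>\<omega>. ramp c (Z t \<omega>))) \<longlongrightarrow> integral\<^sup>L M (\<lambda>\<omega>. ramp c (L \<omega>))) at_top"
    using assms(3) continuous_on_ramp bounded_range_ramp unfolding conv_distr_at_top_def by blast
  ultimately show ?thesis using that order_tendstoD(2) by blast
qed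

lemma integral_truncated_abs_tendsto_zero:
  fixes E :: "real \<Rightarrow> 'a \<Rightarrow> real"
  assumes "prob_space M" and "\<And>t. E t \<in> borel_measurable M"
    and "\<And>\<omega>. \<omega> \<in> space M \<Longrightarrow> ((\<lambda>t. E t \<omega>) \<longlongrightarrow> 0) at_top"
  shows "((\<lambda>t. integral\<^sup>L M (\<lambda>\<omega>. min 1 \<bar>E t \<omega>\<bar>)) \<longlongrightarrow> 0) at_top"
proof -
  interpret prob_space M by fact
  have "((\<lambda>t. integral\<^sup>L M (\<lambda>\<omega>. min 1 \<bar>E t \<omega>\<bar>)) \<longlongrightarrow> integral\<^sup>L M (\<lambda>\<omega>. 0)) at_top"
  proof (rule integral_dominated_convergence_at_top[where w="\<lambda>_. 1"])
    show "AE \<omega> in M. ((\<lambda>t. min 1 \<bar>E t \<omega>\<bar>) \<longlongrightarrow> 0) at_top"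
    proof (rule AE_I2)
      fix \<omega> assume "\<omega> \<in> space M"
      then have "((\<lambda>t. min 1 \<bar>E t \<omega>\<bar>) \<longlongrightarrow> min 1 \<bar>0\<bar>) at_top"
        by (intro tendsto_intros assms(3))
      then show "((\<lambda>t. min 1 \<bar>E t \<omega>\<bar>) \<longlongrightarrow> 0) at_top" by simp
    qed
  qed (use assms(2) in auto)
  then show ?thesis by simp
qed

lemma uniformly_continuous_near_interval:
  fixes g :: "real \<Rightarrow> real"
  assumes "continuous_on UNIV g" and "e > 0"
  obtains \<delta> where "\<delta> > 0" and "\<And>x y. \<bar>y\<bar> \<le> r \<Longrightarrow> \<bar>x - y\<bar> < \<delta> \<Longrightarrow> \<bar>g x - g y\<bar> < e"
proof -
  have "uniformly_continuous_on (cball 0 (r + 1)) g"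
    using assms(1) by (intro compact_uniformly_continuous continuous_on_subset[OF assms(1)]) auto
  then obtain d where "d > 0" and d: "\<And>x y. x \<in> cball 0 (r + 1) \<Longrightarrow> y \<in> cball 0 (r + 1) \<Longrightarrow>
      dist y x < d \<Longrightarrow> dist (g y) (g x) < e"
    unfolding uniformly_continuous_on_def using \<open>e > 0\<close> by metis
  show ?thesis
  proof (rule that[of "min d 1"])
    fix x y :: real assume "\<bar>y\<bar> \<le> r" "\<bar>x - y\<bar> < min d 1"
    then show "\<bar>g x - g y\<bar> < e" using d[of y x] by (auto simp: dist_real_def)
  qed (use \<open>d > 0\<close> in auto)
qed

lemma uniform_modulus_diff_le:
  fixes g :: "real \<Rightarrow> real"
  assumes g_bound: "\<And>x. \<bar>g x\<bar> \<le> B"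
    and modulus: "\<And>x y. \<bar>y\<bar> \<le> k * (c + 1) \<Longrightarrow> \<bar>x - y\<bar> < \<delta> \<Longrightarrow> \<bar>g x - g y\<bar> < e"
    and "e \<ge> 0" and "\<delta> > 0" and "k \<ge> 0" and "z \<ge> 0" and "\<eta> \<ge> 0" and "\<eta> * (c + 1) \<le> \<delta> / 2"
    and approx: "\<bar>x - k * z\<bar> \<le> \<eta> * z + E"
  shows "\<bar>g x - g (k * z)\<bar> \<le> e + 2 * B * ramp c z + 2 * B * min 1 \<bar>E * (2 / \<delta>)\<bar>"
proof -
  have "\<bar>g x - g (k * z)\<bar> \<le> 2 * B" using g_bound[of x] g_bound[of "k * z"] by linarith
  moreover have "B \<ge> 0" using g_bound[of x] by linarith
  then have nonneg: "0 \<le> 2 * B * ramp c z" "0 \<le> 2 * B * min 1 \<bar>E * (2 / \<delta>)\<bar>"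
    using ramp_bounds by auto
  \<comment> \<open>Off the events z \<ge> c + 1 and |E| \<ge> \<delta>/2, x is \<delta>-close to k z \<in> [0, k (c + 1)].\<close>
  consider "z \<ge> c + 1" | "\<bar>E * (2 / \<delta>)\<bar> \<ge> 1" | "z < c + 1" "\<bar>E * (2 / \<delta>)\<bar> < 1" by linarith
  then show ?thesis
  proof cases
    case 1
    then have "ramp c z = 1" by (rule ramp_eq_1)
    then show ?thesis
      unfolding \<open>ramp c z = 1\<close> using \<open>\<bar>g x - g (k * z)\<bar> \<le> 2 * B\<close> nonneg(2) \<open>e \<ge> 0\<close> by linarith
  next
    case 2
    then show ?thesis using \<open>\<bar>g x - g (k * z)\<bar> \<le> 2 * B\<close> nonneg \<open>e \<ge> 0\<close> by simp
  next
    case 3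
    have "\<bar>E\<bar> < \<delta> / 2" using 3(2) \<open>\<delta> > 0\<close> by (simp add: abs_mult field_simps)
    moreover have "\<eta> * z \<le> \<eta> * (c + 1)" using 3(1) \<open>\<eta> \<ge> 0\<close> by (intro mult_left_mono) auto
    ultimately have "\<bar>x - k * z\<bar> < \<delta>" using approx \<open>\<eta> * (c + 1) \<le> \<delta> / 2\<close> by linarith
    moreover have "\<bar>k * z\<bar> \<le> k * (c + 1)"
      using 3(1) \<open>k \<ge> 0\<close> \<open>z \<ge> 0\<close> by (simp add: abs_mult mult_left_mono)
    ultimately show ?thesis using modulus nonneg by fastforce
  qed
qed

lemma abs_integral_diff_le:
  fixes u v a b :: "'a \<Rightarrow> real"
  assumes "prob_space M"
    and meas: "u \<in> borel_measurable M" "v \<in> borel_measurable M" "a \<in> borel_measurable M" "b \<in> borel_measurable M"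
    and bounds: "\<And>\<omega>. \<bar>u \<omega>\<bar> \<le> B" "\<And>\<omega>. \<bar>v \<omega>\<bar> \<le> B" "\<And>\<omega>. \<bar>a \<omega>\<bar> \<le> 1" "\<And>\<omega>. \<bar>b \<omega>\<bar> \<le> 1"
    and diff: "\<And>\<omega>. \<omega> \<in> space M \<Longrightarrow> \<bar>u \<omega> - v \<omega>\<bar> \<le> e + B' * a \<omega> + B' * b \<omega>"
  shows "\<bar>integral\<^sup>L M u - integral\<^sup>L M v\<bar> \<le> e + B' * integral\<^sup>L M a + B' * integral\<^sup>L M b"
proof -
  interpret prob_space M by fact
  have "integrable M u" "integrable M v"
    using meas bounds by (auto intro!: integrable_const_bound[where B=B])
  moreover have "integrable M a" "integrable M b"
    using meas bounds by (auto intro!: integrable_const_bound[where B=1])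
  ultimately have int: "integrable M u" "integrable M v" "integrable M a" "integrable M b" .
  have "\<bar>integral\<^sup>L M u - integral\<^sup>L M v\<bar> = \<bar>integral\<^sup>L M (\<lambda>\<omega>. u \<omega> - v \<omega>)\<bar>" using int by simp
  also have "\<dots> \<le> integral\<^sup>L M (\<lambda>\<omega>. \<bar>u \<omega> - v \<omega>\<bar>)" by (rule integral_abs_bound)
  also have "\<dots> \<le> integral\<^sup>L M (\<lambda>\<omega>. e + B' * a \<omega> + B' * b \<omega>)"
    using int diff by (intro integral_mono) auto
  also have "\<dots> = e + B' * integral\<^sup>L M a + B' * integral\<^sup>L M b" using int by (simp add: prob_space)
  finally show ?thesis .
qed

lemma integral_diff_tendsto_zero_approx:
  fixes X Z :: "real \<Rightarrow> 'a \<Rightarrow> real" and g :: "real \<Rightarrow> real" and B :: real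
  assumes "prob_space M" and "k \<ge> 0" and "L \<in> borel_measurable M" and conv: "conv_distr_at_top M Z L"
    and meas: "\<forall>\<^sub>F t in at_top. X t \<in> borel_measurable M \<and> Z t \<in> borel_measurable M \<and> (\<forall>\<omega>\<in>space M. Z t \<omega> \<ge> 0)"
    and approx: "\<And>\<eta>. \<eta> > 0 \<Longrightarrow> \<exists>E. (\<forall>t. E t \<in> borel_measurable M) \<and> (\<forall>\<omega>\<in>space M. ((\<lambda>t. E t \<omega>) \<longlongrightarrow> 0) at_top)
        \<and> (\<forall>\<^sub>F t in at_top. \<forall>\<omega>\<in>space M. \<bar>X t \<omega> - k * Z t \<omega>\<bar> \<le> \<eta> * Z t \<omega> + E t \<omega>)"
    and g_cont: "continuous_on UNIV g" and g_bound: "\<And>x. \<bar>g x\<bar> \<le> B" and "B > 0"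
  shows "((\<lambda>t. integral\<^sup>L M (\<lambda>\<omega>. g (X t \<omega>)) - integral\<^sup>L M (\<lambda>\<omega>. g (k * Z t \<omega>))) \<longlongrightarrow> 0) at_top"
proof (rule tendstoI)
  fix e :: real assume "e > 0"
  define e' where "e' = e / (8 * B)"
  have "e' > 0" "2 * B * e' = e / 4" using \<open>e > 0\<close> \<open>B > 0\<close> by (auto simp: e'_def)
  obtain c where "c \<ge> 0" and tail: "\<forall>\<^sub>F t in at_top. integral\<^sup>L M (\<lambda>\<omega>. ramp c (Z t \<omega>)) < e'"
    using conv_distr_at_top_tight[OF assms(1,3) conv \<open>e' > 0\<close>] by blast
  obtain \<delta> where "\<delta> > 0" and modulus: "\<And>x y. \<bar>y\<bar> \<le> k * (c + 1) \<Longrightarrow> \<bar>x - y\<bar> < \<delta> \<Longrightarrow> \<bar>g x - g y\<bar> < e / 4"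
    using uniformly_continuous_near_interval[OF g_cont, of "e / 4"] \<open>e > 0\<close> by auto
  define \<eta> where "\<eta> = \<delta> / (2 * (c + 1))"
  have "\<eta> > 0" "\<eta> * (c + 1) \<le> \<delta> / 2" using \<open>\<delta> > 0\<close> \<open>c \<ge> 0\<close> by (auto simp: \<eta>_def divide_simps)
  then obtain E where E_meas: "\<And>t. E t \<in> borel_measurable M"
    and E_lim: "\<And>\<omega>. \<omega> \<in> space M \<Longrightarrow> ((\<lambda>t. E t \<omega> * (2 / \<delta>)) \<longlongrightarrow> 0) at_top"
    and E_bound: "\<forall>\<^sub>F t in at_top. \<forall>\<omega>\<in>space M. \<bar>X t \<omega> - k * Z t \<omega>\<bar> \<le> \<eta> * Z t \<omega> + E t \<omega>"
    using approx[of \<eta>] tendsto_mult_left_zero by blast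
  have "((\<lambda>t. integral\<^sup>L M (\<lambda>\<omega>. min 1 \<bar>E t \<omega> * (2 / \<delta>)\<bar>)) \<longlongrightarrow> 0) at_top"
    using E_meas E_lim by (intro integral_truncated_abs_tendsto_zero[OF assms(1)]) auto
  then have small_E: "\<forall>\<^sub>F t in at_top. integral\<^sup>L M (\<lambda>\<omega>. min 1 \<bar>E t \<omega> * (2 / \<delta>)\<bar>) < e'"
    using \<open>e' > 0\<close> by (rule order_tendstoD)
  from meas E_bound tail small_E
  show "\<forall>\<^sub>F t in at_top. dist (integral\<^sup>L M (\<lambda>\<omega>. g (X t \<omega>)) - integral\<^sup>L M (\<lambda>\<omega>. g (k * Z t \<omega>))) 0 < e"
  proof eventually_elim
    case (elim t)
    have "\<bar>integral\<^sup>L M (\<lambda>\<omega>. g (X t \<omega>)) - integral\<^sup>L M (\<lambda>\<omega>. g (k * Z t \<omega>))\<bar>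
        \<le> e / 4 + 2 * B * integral\<^sup>L M (\<lambda>\<omega>. ramp c (Z t \<omega>)) + 2 * B * integral\<^sup>L M (\<lambda>\<omega>. min 1 \<bar>E t \<omega> * (2 / \<delta>)\<bar>)"
    proof (rule abs_integral_diff_le[OF assms(1)])
      show "\<bar>g (X t \<omega>) - g (k * Z t \<omega>)\<bar> \<le> e / 4 + 2 * B * ramp c (Z t \<omega>) + 2 * B * min 1 \<bar>E t \<omega> * (2 / \<delta>)\<bar>"
        if "\<omega> \<in> space M" for \<omega>
        using that elim(1,2) \<open>e > 0\<close> \<open>\<delta> > 0\<close> \<open>k \<ge> 0\<close> \<open>\<eta> > 0\<close> \<open>\<eta> * (c + 1) \<le> \<delta> / 2\<close>
        by (intro uniform_modulus_diff_le[OF g_bound modulus]) auto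
    qed (use elim(1) g_bound E_meas ramp_bounds in
        \<open>auto intro!: borel_measurable_continuous_on[OF g_cont] borel_measurable_continuous_on[OF continuous_on_ramp]
           borel_measurable_min borel_measurable_abs borel_measurable_times borel_measurable_const\<close>)
    also have "\<dots> < e / 4 + 2 * B * e' + 2 * B * e'"
      using elim(3,4) \<open>B > 0\<close> by (intro add_less_le_mono add_strict_left_mono) auto
    finally show ?case using \<open>2 * B * e' = e / 4\<close> \<open>e > 0\<close> by (simp add: dist_real_def)
  qed
qed

lemma conv_distr_at_top_approx:
  fixes X Z :: "real \<Rightarrow> 'a \<Rightarrow> real"
  assumes "prob_space M" and "k \<ge> 0" and "L \<in> borel_measurable M" and conv: "conv_distr_at_top M Z L"
    and meas: "\<forall>\<^sub>F t in at_top. X t \<in> borel_measurable M \<and> Z t \<in> borel_measurable M \<and> (\<forall>\<omega>\<in>space M. Z t \<omega> \<ge> 0)"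
    and approx: "\<And>\<eta>. \<eta> > 0 \<Longrightarrow> \<exists>E. (\<forall>t. E t \<in> borel_measurable M) \<and> (\<forall>\<omega>\<in>space M. ((\<lambda>t. E t \<omega>) \<longlongrightarrow> 0) at_top)
        \<and> (\<forall>\<^sub>F t in at_top. \<forall>\<omega>\<in>space M. \<bar>X t \<omega> - k * Z t \<omega>\<bar> \<le> \<eta> * Z t \<omega> + E t \<omega>)"
  shows "conv_distr_at_top M X (\<lambda>\<omega>. k * L \<omega>)"
  unfolding conv_distr_at_top_def
proof (intro allI impI)
  fix g :: "real \<Rightarrow> real" assume g_cont: "continuous_on UNIV g" and "bounded (range g)"
  then obtain B0 where "\<And>x. \<bar>g x\<bar> \<le> B0" by (auto simp: bounded_real)
  then obtain B where "B > 0" and "\<And>x. \<bar>g x\<bar> \<le> B"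
    using order_trans[OF _ max.cobounded1] zero_less_one less_max_iff_disj by metis
  then have "((\<lambda>t. integral\<^sup>L M (\<lambda>\<omega>. g (X t \<omega>)) - integral\<^sup>L M (\<lambda>\<omega>. g (k * Z t \<omega>))) \<longlongrightarrow> 0) at_top"
    using assms g_cont by (intro integral_diff_tendsto_zero_approx) auto
  moreover have "((\<lambda>t. integral\<^sup>L M (\<lambda>\<omega>. g (k * Z t \<omega>))) \<longlongrightarrow> integral\<^sup>L M (\<lambda>\<omega>. g (k * L \<omega>))) at_top"
    using conv_distr_at_top_compose[OF conv, of "\<lambda>x. k * x"] g_cont \<open>bounded (range g)\<close>
    unfolding conv_distr_at_top_def by (auto intro: continuous_intros)
  ultimately show "((\<lambda>t. integral\<^sup>L M (\<lambda>\<omega>. g (X t \<omega>))) \<longlongrightarrow> integral\<^sup>L M (\<lambda>\<omega>. g (k * L \<omega>))) at_top"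
    using tendsto_add by fastforce
qed

lemma integral_powr_le:
  fixes R t \<gamma> :: real
  assumes "1 \<le> R" and "R \<le> t"
  shows "integral {R..t} (\<lambda>s. s powr \<gamma>) \<le> (t powr \<gamma> + 1) * t"
proof -
  have "s powr \<gamma> \<le> t powr \<gamma> + 1" if "s \<in> {R..t}" for s
  proof (cases "\<gamma> \<ge> 0")
    case True
    then show ?thesis using that assms by (simp add: add_increasing2 powr_mono2)
  next
    case False
    then have "s powr \<gamma> \<le> s powr 0" using that assms by (intro powr_mono) auto
    then show ?thesis using that assms by (simp add: add_increasing)
  qed
  moreover have "continuous_on {R..t} (\<lambda>s. s powr \<gamma>)"
    using assms by (intro continuous_on_powr' continuous_intros) auto
  ultimately have "integral {R..t} (\<lambda>s. s powr \<gamma>) \<le> (t powr \<gamma> + 1) * (t - R)"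
    using assms integral_bound[of R t "\<lambda>s. s powr \<gamma>" "t powr \<gamma> + 1"] by (auto dest: abs_le_D1)
  also have "\<dots> \<le> (t powr \<gamma> + 1) * t" using assms by (intro mult_left_mono) auto
  finally show ?thesis .
qed

lemma abs_integral_approx_le:
  fixes u h :: "real \<Rightarrow> real" and R t \<rho> \<eta> C \<gamma> :: real
  assumes "1 \<le> R" and "R \<le> t"
    and u_cont: "continuous_on {0..t} u" and h_cont: "continuous_on {1..t} h"
    and "\<And>s. s \<in> {1..t} \<Longrightarrow> h s \<ge> 0"
    and "C \<ge> 0" and "\<eta> \<ge> 0"
    and approx: "\<And>s. s \<in> {R..t} \<Longrightarrow> \<bar>u s - \<rho> * h s\<bar> \<le> \<eta> * h s + C * s powr \<gamma>"
  shows "\<bar>integral {0..t} u - \<rho> * integral {1..t} h\<bar>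
     \<le> \<bar>integral {0..R} u - \<rho> * integral {1..R} h\<bar> + \<eta> * integral {1..t} h + C * ((t powr \<gamma> + 1) * t)"
proof -
  have u_int: "u integrable_on {R..t}" and h_int: "h integrable_on {R..t}"
    and p_int: "(\<lambda>s. s powr \<gamma>) integrable_on {R..t}"
    using assms by (auto intro!: integrable_continuous_real continuous_intros
        intro: continuous_on_subset[OF u_cont] continuous_on_subset[OF h_cont])
  have "integral {0..R} u + integral {R..t} u = integral {0..t} u"
    using assms by (intro Henstock_Kurzweil_Integration.integral_combine integrable_continuous_real u_cont) auto
  moreover have h_split: "integral {1..R} h + integral {R..t} h = integral {1..t} h"
    using assms by (intro Henstock_Kurzweil_Integration.integral_combine integrable_continuous_real h_cont) auto
  moreover have "integral {R..t} (\<lambda>s. u s - \<rho> * h s) = integral {R..t} u - \<rho> * integral {R..t} h"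
    using u_int h_int by (subst integral_diff) (auto intro: integrable_on_mult_right)
  ultimately have split: "integral {0..t} u - \<rho> * integral {1..t} h
      = (integral {0..R} u - \<rho> * integral {1..R} h) + integral {R..t} (\<lambda>s. u s - \<rho> * h s)"
    by (simp add: algebra_simps flip: h_split)
  have "norm (integral {R..t} (\<lambda>s. u s - \<rho> * h s)) \<le> integral {R..t} (\<lambda>s. \<eta> * h s + C * s powr \<gamma>)"
    using approx u_int h_int p_int
    by (intro integral_norm_bound_integral) (auto intro: integrable_diff integrable_add integrable_on_mult_right)
  then have "\<bar>integral {R..t} (\<lambda>s. u s - \<rho> * h s)\<bar> \<le> integral {R..t} (\<lambda>s. \<eta> * h s + C * s powr \<gamma>)"
    by simp
  also have "\<dots> = \<eta> * integral {R..t} h + C * integral {R..t} (\<lambda>s. s powr \<gamma>)"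
    using h_int p_int by (subst integral_add) (auto intro: integrable_on_mult_right)
  also have "\<dots> \<le> \<eta> * integral {1..t} h + C * ((t powr \<gamma> + 1) * t)"
  proof (intro add_mono mult_left_mono integral_powr_le)
    have "integral {1..R} h \<ge> 0"
      using assms by (intro integral_nonneg integrable_continuous_real continuous_on_subset[OF h_cont]) auto
    then show "integral {R..t} h \<le> integral {1..t} h" using h_split by linarith
  qed (use assms in auto)
  finally show ?thesis unfolding split by linarith
qed

lemma powr_growth_ratio_tendsto_zero:
  fixes \<alpha> \<gamma> :: real
  assumes "\<alpha> > 0" and "\<gamma> + \<alpha> > 0"
  shows "((\<lambda>t. (t powr \<gamma> + 1) * t / t powr (1 + \<gamma> + \<alpha>)) \<longlongrightarrow> 0) at_top"
proof -
  have "((\<lambda>t. t powr (- \<alpha>) + t powr (- (\<gamma> + \<alpha>))) \<longlongrightarrow> 0 + 0) at_top"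
    using assms by (intro tendsto_add tendsto_neg_powr filterlim_ident) auto
  moreover have "\<forall>\<^sub>F t in at_top. t powr (- \<alpha>) + t powr (- (\<gamma> + \<alpha>)) = (t powr \<gamma> + 1) * t / t powr (1 + \<gamma> + \<alpha>)"
    using eventually_gt_at_top[of 0]
  proof eventually_elim
    case (elim t)
    have "(t powr \<gamma> + 1) * t / t powr (1 + \<gamma> + \<alpha>)
        = t powr (\<gamma> + 1) / t powr (1 + \<gamma> + \<alpha>) + t powr 1 / t powr (1 + \<gamma> + \<alpha>)"
      using elim by (simp add: powr_add algebra_simps add_divide_distrib)
    also have "\<dots> = t powr (- \<alpha>) + t powr (- (\<gamma> + \<alpha>))"
      by (simp only: powr_diff[symmetric]) (simp add: algebra_simps)
    finally show ?case by simp
  qed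
  ultimately show ?thesis by (simp add: tendsto_cong)
qed

locale power_like_integrand =
  fixes M :: "'a measure" and Y :: "real \<Rightarrow> 'a \<Rightarrow> real" and f :: "real \<Rightarrow> real \<Rightarrow> real"
    and \<rho> \<alpha> \<gamma> :: real
  assumes prob: "prob_space M"
    and Y_meas: "\<And>t. t \<ge> 0 \<Longrightarrow> Y t \<in> borel_measurable M"
    and Y_cont: "\<And>\<omega>. \<omega> \<in> space M \<Longrightarrow> continuous_on {0..} (\<lambda>t. Y t \<omega>)"
    and Y_nonneg: "\<And>t \<omega>. t \<ge> 0 \<Longrightarrow> \<omega> \<in> space M \<Longrightarrow> Y t \<omega> \<ge> 0"
    and alpha: "\<alpha> \<ge> 0" and beta: "\<gamma> + \<alpha> > 0"
    and f_cont: "continuous_on ({0..} \<times> {0..}) (\<lambda>(t, y). f t y)"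
    and rho: "\<rho> \<ge> 0"
    and A_f: "\<And>\<epsilon>. \<epsilon> > 0 \<Longrightarrow> \<exists>r. \<forall>t y. t \<ge> 0 \<longrightarrow> y \<ge> 0 \<longrightarrow> t + y \<ge> r \<longrightarrow>
                \<bar>f t y * (1 + t) powr (- \<gamma>) * (1 + y) powr (- \<alpha>) - \<rho>\<bar> \<le> \<epsilon>"
begin

text \<open>In the notation of the paper, U_t = 2 F t and A_t = A t.\<close>

definition F :: "real \<Rightarrow> 'a \<Rightarrow> real" where
  "F t \<omega> = integral {0..t} (\<lambda>s. f s (Y s \<omega>))"

definition A :: "real \<Rightarrow> 'a \<Rightarrow> real" where
  "A t \<omega> = integral {1..t} (\<lambda>s. s powr \<gamma> * rpow (Y s \<omega>) \<alpha>)"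

lemma continuous_on_f_path:
  assumes "\<omega> \<in> space M"
  shows "continuous_on {0..} (\<lambda>s. f s (Y s \<omega>))"
  using continuous_on_compose2[OF f_cont continuous_on_Pair[OF continuous_on_id Y_cont[OF assms]]]
    Y_nonneg[OF _ assms] by auto

lemma continuous_on_A_integrand:
  assumes "\<omega> \<in> space M"
  shows "continuous_on {1..} (\<lambda>s. s powr \<gamma> * rpow (Y s \<omega>) \<alpha>)"
proof -
  have "continuous_on {1..} (\<lambda>s. Y s \<omega>)" by (rule continuous_on_subset[OF Y_cont[OF assms]]) auto
  then have "continuous_on {1..} (\<lambda>s. Y s \<omega> powr \<alpha>)" if "\<alpha> \<noteq> 0"
    using alpha that Y_nonneg[OF _ assms] by (intro continuous_on_powr' continuous_on_const) auto
  then have "continuous_on {1..} (\<lambda>s. rpow (Y s \<omega>) \<alpha>)"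
    by (cases "\<alpha> = 0") (simp_all add: rpow_def)
  moreover have "continuous_on {1..} (\<lambda>s::real. s powr \<gamma>)"
    by (intro continuous_on_powr' continuous_on_id continuous_on_const) auto
  ultimately show ?thesis by (rule continuous_on_mult[rotated])
qed

lemma F_measurable:
  assumes "t \<ge> 0"
  shows "F t \<in> borel_measurable M"
  unfolding F_def
proof (rule borel_measurable_integral_continuous_param)
  fix s :: real assume "s \<in> {0..t}"
  \<comment> \<open>f is continuous only on the closed quadrant, so measurability goes through max 0.\<close>
  have "continuous_on UNIV (\<lambda>y::real. (s, max 0 y))"
    by (intro continuous_on_Pair continuous_on_const continuous_on_max continuous_on_id)
  moreover have "range (\<lambda>y::real. (s, max 0 y)) \<subseteq> {0..} \<times> {0..}" using \<open>s \<in> {0..t}\<close> by auto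
  ultimately have "continuous_on UNIV (\<lambda>y. (\<lambda>(t, y). f t y) (s, max 0 y))"
    by (rule continuous_on_compose2[OF f_cont])
  then have f_s_cont: "continuous_on UNIV (\<lambda>y. f s (max 0 y))" by simp
  have "Y s \<in> borel_measurable M" using Y_meas \<open>s \<in> {0..t}\<close> by simp
  from borel_measurable_continuous_on[OF f_s_cont this]
  have "(\<lambda>\<omega>. f s (max 0 (Y s \<omega>))) \<in> borel_measurable M" .
  moreover have "f s (max 0 (Y s \<omega>)) = f s (Y s \<omega>)" if "\<omega> \<in> space M" for \<omega>
    using Y_nonneg[OF _ that, of s] \<open>s \<in> {0..t}\<close> by simp
  ultimately show "(\<lambda>\<omega>. f s (Y s \<omega>)) \<in> borel_measurable M"
    by (rule measurable_cong[THEN iffD1, rotated])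
next
  show "continuous_on {0..t} (\<lambda>s. f s (Y s \<omega>))" if "\<omega> \<in> space M" for \<omega>
    by (rule continuous_on_subset[OF continuous_on_f_path[OF that]]) auto
qed (use assms in simp)

lemma A_measurable:
  assumes "t \<ge> 1"
  shows "A t \<in> borel_measurable M"
  unfolding A_def
proof (rule borel_measurable_integral_continuous_param)
  show "(\<lambda>\<omega>. s powr \<gamma> * rpow (Y s \<omega>) \<alpha>) \<in> borel_measurable M" if "s \<in> {1..t}" for s
  proof -
    have "Y s \<in> borel_measurable M" using Y_meas that by simp
    then show ?thesis unfolding rpow_def by measurable
  qed
  show "continuous_on {1..t} (\<lambda>s. s powr \<gamma> * rpow (Y s \<omega>) \<alpha>)" if "\<omega> \<in> space M" for \<omega>
    by (rule continuous_on_subset[OF continuous_on_A_integrand[OF that]]) auto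
qed (use assms in simp)

lemma A_nonneg:
  assumes "t \<ge> 1" and "\<omega> \<in> space M"
  shows "A t \<omega> \<ge> 0"
  unfolding A_def using assms
  by (intro integral_nonneg integrable_continuous_real continuous_on_subset[OF continuous_on_A_integrand])
     (auto simp: rpow_def)

lemma F_minus_A_bound:
  assumes "1 \<le> R" and "R \<le> t" and "C \<ge> 0" and "\<eta> \<ge> 0" and "\<omega> \<in> space M"
    and f_approx: "\<And>s y. s \<ge> R \<Longrightarrow> y \<ge> 0 \<Longrightarrow>
           \<bar>f s y - \<rho> * (s powr \<gamma> * rpow y \<alpha>)\<bar> \<le> \<eta> * (s powr \<gamma> * rpow y \<alpha>) + C * s powr \<gamma>"
  shows "\<bar>F t \<omega> - \<rho> * A t \<omega>\<bar> \<le> \<bar>F R \<omega> - \<rho> * A R \<omega>\<bar> + \<eta> * A t \<omega> + C * ((t powr \<gamma> + 1) * t)"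
  unfolding F_def A_def
proof (rule abs_integral_approx_le)
  show "continuous_on {0..t} (\<lambda>s. f s (Y s \<omega>))"
    by (rule continuous_on_subset[OF continuous_on_f_path[OF \<open>\<omega> \<in> space M\<close>]]) auto
  show "continuous_on {1..t} (\<lambda>s. s powr \<gamma> * rpow (Y s \<omega>) \<alpha>)"
    by (rule continuous_on_subset[OF continuous_on_A_integrand[OF \<open>\<omega> \<in> space M\<close>]]) auto
  show "s powr \<gamma> * rpow (Y s \<omega>) \<alpha> \<ge> 0" for s
    by (simp add: rpow_def)
  show "\<bar>f s (Y s \<omega>) - \<rho> * (s powr \<gamma> * rpow (Y s \<omega>) \<alpha>)\<bar> \<le> \<eta> * (s powr \<gamma> * rpow (Y s \<omega>) \<alpha>) + C * s powr \<gamma>"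
    if "s \<in> {R..t}" for s
    using that assms(1) Y_nonneg[OF _ \<open>\<omega> \<in> space M\<close>, of s] by (intro f_approx) auto
qed (use assms in auto)

lemma normalized_F_approx:
  assumes "\<eta> > 0"
  shows "\<exists>E. (\<forall>t. E t \<in> borel_measurable M) \<and> (\<forall>\<omega>\<in>space M. ((\<lambda>t. E t \<omega>) \<longlongrightarrow> 0) at_top)
    \<and> (\<forall>\<^sub>F t in at_top. \<forall>\<omega>\<in>space M. \<bar>F t \<omega> / t powr (1 + \<gamma> + \<alpha>) - \<rho> * (A t \<omega> / t powr (1 + \<gamma> + \<alpha>))\<bar>
          \<le> \<eta> * (A t \<omega> / t powr (1 + \<gamma> + \<alpha>)) + E t \<omega>)"
proof -
  define p where "p = 1 + \<gamma> + \<alpha>"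
  obtain R C where "R \<ge> 1" "C \<ge> 0" "\<alpha> = 0 \<Longrightarrow> C = 0" and f_approx: "\<And>s y. s \<ge> R \<Longrightarrow> y \<ge> 0 \<Longrightarrow>
      \<bar>f s y - \<rho> * (s powr \<gamma> * rpow y \<alpha>)\<bar> \<le> \<eta> * (s powr \<gamma> * rpow y \<alpha>) + C * s powr \<gamma>"
    using asymptotic_power_bound[OF alpha rho assms A_f] by blast
  define K where "K \<omega> = \<bar>F R \<omega> - \<rho> * A R \<omega>\<bar>" for \<omega>
  define E where "E t \<omega> = K \<omega> * t powr (- p) + C * ((t powr \<gamma> + 1) * t / t powr p)" for t \<omega>
  have "F R \<in> borel_measurable M" "A R \<in> borel_measurable M"
    using \<open>R \<ge> 1\<close> F_measurable A_measurable by auto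
  then have "K \<in> borel_measurable M" unfolding K_def by measurable
  then have "E t \<in> borel_measurable M" for t unfolding E_def by measurable
  moreover have "((\<lambda>t. E t \<omega>) \<longlongrightarrow> 0) at_top" for \<omega>
  proof -
    have "((\<lambda>t. C * ((t powr \<gamma> + 1) * t / t powr p)) \<longlongrightarrow> 0) at_top"
    proof (cases "\<alpha> = 0")
      case False
      then show ?thesis
        unfolding p_def using alpha beta by (intro tendsto_mult_right_zero powr_growth_ratio_tendsto_zero) auto
    qed (simp add: \<open>\<alpha> = 0 \<Longrightarrow> C = 0\<close>)
    moreover have "((\<lambda>t. K \<omega> * t powr (- p)) \<longlongrightarrow> 0) at_top"
      using beta by (intro tendsto_mult_right_zero tendsto_neg_powr filterlim_ident) (auto simp: p_def)
    ultimately show ?thesis unfolding E_def by (rule tendsto_add_zero[rotated])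
  qed
  moreover have "\<forall>\<^sub>F t in at_top. \<forall>\<omega>\<in>space M. \<bar>F t \<omega> / t powr p - \<rho> * (A t \<omega> / t powr p)\<bar>
      \<le> \<eta> * (A t \<omega> / t powr p) + E t \<omega>"
    using eventually_ge_at_top[of R]
  proof eventually_elim
    case (elim t)
    show ?case
    proof
      fix \<omega> assume "\<omega> \<in> space M"
      have "t powr p > 0" using elim \<open>R \<ge> 1\<close> by simp
      have "\<bar>F t \<omega> / t powr p - \<rho> * (A t \<omega> / t powr p)\<bar> = \<bar>F t \<omega> - \<rho> * A t \<omega>\<bar> / t powr p"
        using \<open>t powr p > 0\<close> by (simp add: diff_divide_distrib abs_div_pos)
      also have "\<dots> \<le> (K \<omega> + \<eta> * A t \<omega> + C * ((t powr \<gamma> + 1) * t)) / t powr p"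
        unfolding K_def using F_minus_A_bound[OF \<open>R \<ge> 1\<close> elim \<open>C \<ge> 0\<close> _ \<open>\<omega> \<in> space M\<close> f_approx] assms \<open>t powr p > 0\<close>
        by (intro divide_right_mono) auto
      also have "\<dots> = \<eta> * (A t \<omega> / t powr p) + E t \<omega>"
        by (simp add: E_def powr_minus_divide add_divide_distrib)
      finally show "\<bar>F t \<omega> / t powr p - \<rho> * (A t \<omega> / t powr p)\<bar> \<le> \<eta> * (A t \<omega> / t powr p) + E t \<omega>" .
    qed
  qed
  ultimately show ?thesis unfolding p_def by blast
qed

theorem conv_distr_at_top_F:
  assumes "L \<in> borel_measurable M" and "conv_distr_at_top M (\<lambda>t \<omega>. A t \<omega> / t powr (1 + \<gamma> + \<alpha>)) L"
  shows "conv_distr_at_top M (\<lambda>t \<omega>. F t \<omega> / t powr (1 + \<gamma> + \<alpha>)) (\<lambda>\<omega>. \<rho> * L \<omega>)"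
proof (rule conv_distr_at_top_approx[OF prob rho assms])
  show "\<forall>\<^sub>F t in at_top. (\<lambda>\<omega>. F t \<omega> / t powr (1 + \<gamma> + \<alpha>)) \<in> borel_measurable M
      \<and> (\<lambda>\<omega>. A t \<omega> / t powr (1 + \<gamma> + \<alpha>)) \<in> borel_measurable M
      \<and> (\<forall>\<omega>\<in>space M. A t \<omega> / t powr (1 + \<gamma> + \<alpha>) \<ge> 0)"
    using eventually_ge_at_top[of 1]
    by eventually_elim (use F_measurable A_measurable A_nonneg in auto)
qed (rule normalized_F_approx)

end

theorem lemma3p3:
  fixes M :: "'a measure" and Y :: "real \<Rightarrow> 'a \<Rightarrow> real"
    and f :: "real \<Rightarrow> real \<Rightarrow> real" and \<rho> \<alpha> \<gamma> :: real and At :: "'a \<Rightarrow> real"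
  assumes "prob_space M"
    and Y_meas: "\<And>t. t \<ge> 0 \<Longrightarrow> Y t \<in> borel_measurable M"
    and Y_cont: "\<And>\<omega>. \<omega> \<in> space M \<Longrightarrow> continuous_on {0..} (\<lambda>t. Y t \<omega>)"
    and Y_nonneg: "\<And>t \<omega>. t \<ge> 0 \<Longrightarrow> \<omega> \<in> space M \<Longrightarrow> Y t \<omega> \<ge> 0"
    and alpha: "\<alpha> \<ge> 0" and beta: "\<gamma> + \<alpha> > 0"
    and f_cont: "continuous_on ({0..} \<times> {0..}) (\<lambda>(t, y). f t y)"
    and f_nonneg: "\<And>t y. t \<ge> 0 \<Longrightarrow> y \<ge> 0 \<Longrightarrow> f t y \<ge> 0"
    and rho: "\<rho> > 0"
    and A_f: "\<And>\<epsilon>. \<epsilon> > 0 \<Longrightarrow> \<exists>r. \<forall>t y. t \<ge> 0 \<longrightarrow> y \<ge> 0 \<longrightarrow> t + y \<ge> r \<longrightarrow>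
                \<bar>f t y * (1 + t) powr (- \<gamma>) * (1 + y) powr (- \<alpha>) - \<rho>\<bar> \<le> \<epsilon>"
    and At_meas: "At \<in> borel_measurable M"
    and At_nonneg: "\<And>\<omega>. \<omega> \<in> space M \<Longrightarrow> At \<omega> \<ge> 0"
    and A_Y: "conv_distr_at_top M
                (\<lambda>t \<omega>. integral {1..t} (\<lambda>s. s powr \<gamma> * rpow (Y s \<omega>) \<alpha>) / t powr (1 + \<gamma> + \<alpha>)) At"
  shows "conv_distr_at_top M
           (\<lambda>t \<omega>. 2 * integral {0..t} (\<lambda>s. f s (Y s \<omega>)) / t powr (1 + (\<gamma> + \<alpha>)))
           (\<lambda>\<omega>. 2 * \<rho> * At \<omega>)"
proof -
  interpret power_like_integrand M Y f \<rho> \<alpha> \<gamma>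
    by (rule power_like_integrand.intro)
       (fact assms(1) Y_meas Y_cont Y_nonneg alpha beta f_cont A_f less_imp_le[OF rho])+
  have "conv_distr_at_top M (\<lambda>t \<omega>. F t \<omega> / t powr (1 + \<gamma> + \<alpha>)) (\<lambda>\<omega>. \<rho> * At \<omega>)"
    using A_Y by (intro conv_distr_at_top_F At_meas) (simp add: A_def)
  moreover have "continuous_on UNIV (\<lambda>x::real. 2 * x)"
    by (intro continuous_on_mult continuous_on_const continuous_on_id)
  ultimately have "conv_distr_at_top M (\<lambda>t \<omega>. 2 * (F t \<omega> / t powr (1 + \<gamma> + \<alpha>))) (\<lambda>\<omega>. 2 * (\<rho> * At \<omega>))"
    by (rule conv_distr_at_top_compose)
  then show ?thesis by (simp add: F_def add.assoc mult.assoc)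
qed

end
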